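(* Let $b,c,d:[0,1]\to\mathbb{C}$ be continuous with $c(x)d(x)\ne0$ for all $x\in[0,1]$, let $a(x,z)=d(x)z^{-1}+b(x)+c(x)z$, and let $R_n(a)=T_n(a)+\sigma_nX_n$ be as below. Let $k=k(n)$ be a sequence of positive integers with $k\to\infty$, $k=o(n)$ and $k\sigma_n^2\to0$. For $j\in\mathbb{N}$ with $1\le j\le n/k$, let $R_k^{(j)}$ be the $k\times k$ principal submatrix of $R_n(a)$ with row and column indices $(j-1)k+1,\dots,jk$. Fix $j\in\mathbb{N}$. Then for almost every $z\in\mathbb{C}$ and every $\varepsilon>0$, \[ \mathbb{P}\Bigl(\bigl|\log|\det(R_k^{(j)}-zI)|-k\,\gamma(jk/n,z)\bigr|\ge k\varepsilon\Bigr)=o(1)\quad(n\to\infty). \]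
   Context: $T_n(a)$ is the tridiagonal matrix with diagonal entries $b(i/n)$, entries $d(i/n)$ at positions $(i,i+1)$ and $c(i/n)$ at positions $(i+1,i)$. $X_n$ is a random tridiagonal $n\times n$ matrix whose entries on the three central diagonals are i.i.d. with mean $0$ and finite variance (other entries $0$), and $\sigma_n>0$, $\sigma_n\to0$. For $x\in[0,1]$, $T_m(a_x)$ denotes the $m\times m$ tridiagonal Toeplitz matrix with symbol $a_x(z)=d(x)z^{-1}+b(x)+c(x)z$ (diagonal $b(x)$, off-diagonals $d(x)$ and $c(x)$), and $\gamma(x,z):=\lim_{m\to\infty}\frac1m\log|\det(T_m(a_x)-zI)|$, which equals $\log|c(x)|+\log\max(|\lambda_1|,|\lambda_2|)$ where $\lambda_{1,2}$ are the roots of $c(x)\lambda^2+(b(x)-z)\lambda+d(x)=0$. *)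

theory Defs
  imports "HOL-Probability.Probability" "Jordan_Normal_Form.Determinant"
begin

definition tridiag :: "nat \<Rightarrow> nat \<Rightarrow> bool" where
  "tridiag r s \<longleftrightarrow> r = s \<or> s = r + 1 \<or> r = s + 1"

text \<open>The variable-coefficient tridiagonal matrix T_n(a): diagonal b(i/n), position (i,i+1)
  entry d(i/n), position (i+1,i) entry c(i/n) (1-indexed i; here written 0-indexed).\<close>
definition T_mat :: "(real \<Rightarrow> complex) \<Rightarrow> (real \<Rightarrow> complex) \<Rightarrow> (real \<Rightarrow> complex)
    \<Rightarrow> nat \<Rightarrow> complex mat" where
  "T_mat b c d n = mat n n (\<lambda>(r, s).
     if r = s then b (real (r + 1) / real n)
     else if s = r + 1 then d (real (r + 1) / real n)
     else if r = s + 1 then c (real (s + 1) / real n)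
     else 0)"

definition X_mat :: "(nat \<Rightarrow> nat \<Rightarrow> nat \<Rightarrow> 'w \<Rightarrow> complex) \<Rightarrow> nat \<Rightarrow> 'w \<Rightarrow> complex mat" where
  "X_mat \<xi> n \<omega> = mat n n (\<lambda>(r, s). if tridiag r s then \<xi> n r s \<omega> else 0)"

definition R_mat :: "(real \<Rightarrow> complex) \<Rightarrow> (real \<Rightarrow> complex) \<Rightarrow> (real \<Rightarrow> complex)
    \<Rightarrow> (nat \<Rightarrow> real) \<Rightarrow> (nat \<Rightarrow> nat \<Rightarrow> nat \<Rightarrow> 'w \<Rightarrow> complex) \<Rightarrow> nat \<Rightarrow> 'w \<Rightarrow> complex mat" where
  "R_mat b c d \<sigma> \<xi> n \<omega> = T_mat b c d n + complex_of_real (\<sigma> n) \<cdot>\<^sub>m X_mat \<xi> n \<omega>"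

text \<open>The k x k principal submatrix with (1-indexed) row/column indices (j-1)k+1, ..., jk.\<close>
definition principal_block :: "complex mat \<Rightarrow> nat \<Rightarrow> nat \<Rightarrow> complex mat" where
  "principal_block A k j = mat k k (\<lambda>(r, s). A $$ ((j - 1) * k + r, (j - 1) * k + s))"

definition gamma_fn :: "(real \<Rightarrow> complex) \<Rightarrow> (real \<Rightarrow> complex) \<Rightarrow> (real \<Rightarrow> complex)
    \<Rightarrow> real \<Rightarrow> complex \<Rightarrow> real" where
  "gamma_fn b c d x z = ln (cmod (c x)) +
     ln (Max (cmod ` {l. c x * l ^ 2 + (b x - z) * l + d x = 0}))"

end

theory Submission
  imports Defs
begin

text \<open>For almost every \<open>z\<close> the roots \<open>\<mu>1, \<mu>2\<close> of \<open>\<mu>\<^sup>2 - (b 0 - z) \<mu> + c 0 d 0 = 0\<close> have distinct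
  moduli \<open>|\<mu>2| < |\<mu>1|\<close>, and \<open>\<gamma>(0, z) = ln |\<mu>1|\<close>; equal moduli would put \<open>z\<close> on the image of a
  circle under a smooth map. Since \<open>jk/n \<rightarrow> 0\<close>, the \<open>j\<close>-th diagonal block of \<open>T\<^sub>n(a) - z\<close> is
  entrywise close to the Toeplitz matrix \<open>T\<^sub>k(a\<^sub>0) - z\<close>, and by Chebyshev's inequality and a union
  bound over its \<open>3k\<close> random entries, \<open>\<sigma>\<^sub>n X\<^sub>n\<close> is entrywise small on the block with probability
  \<open>1 - O(k \<sigma>\<^sub>n\<^sup>2)\<close>. On that event the determinant is a continuant whose three-term recurrence is a
  small perturbation of \<open>D (m + 2) = (\<mu>1 + \<mu>2) D (m + 1) - \<mu>1 \<mu>2 D m\<close>. Written in the coordinates of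
  the two modes \<open>\<mu>1\<^sup>m\<close> and \<open>\<mu>2\<^sup>m\<close>, the dominant mode stays dominant, so
  \<open>|det| = |\<mu>1|\<^sup>k exp (o(k))\<close>. Finally \<open>\<gamma>(jk/n, z) \<rightarrow> ln |\<mu>1|\<close> by continuity.\<close>

section \<open>Continuants\<close>

fun continuant :: "(nat \<Rightarrow> 'a::comm_ring_1) \<Rightarrow> (nat \<Rightarrow> 'a) \<Rightarrow> nat \<Rightarrow> 'a" where
  "continuant \<alpha> \<beta> 0 = 1"
| "continuant \<alpha> \<beta> (Suc 0) = \<alpha> 0"
| "continuant \<alpha> \<beta> (Suc (Suc m)) =
     \<alpha> (Suc m) * continuant \<alpha> \<beta> (Suc m) - \<beta> (Suc m) * continuant \<alpha> \<beta> m"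

lemma det_tridiagonal_Suc_Suc:
  fixes f :: "nat \<Rightarrow> nat \<Rightarrow> 'a::comm_ring_1"
  assumes tri: "\<And>r s. r < Suc (Suc m) \<Longrightarrow> s < Suc (Suc m) \<Longrightarrow> \<not> tridiag r s \<Longrightarrow> f r s = 0"
  shows "det (mat (Suc (Suc m)) (Suc (Suc m)) (\<lambda>(r, s). f r s)) =
           f (Suc m) (Suc m) * det (mat (Suc m) (Suc m) (\<lambda>(r, s). f r s))
           - f (Suc m) m * f m (Suc m) * det (mat m m (\<lambda>(r, s). f r s))"
proof -
  let ?P = "\<lambda>n. mat n n (\<lambda>(r, s). f r s)"
  let ?A = "?P (Suc (Suc m))"
  let ?Q = "mat_delete ?A (Suc m) m"
  have "det ?Q = (\<Sum>r<Suc m. ?Q $$ (r, m) * cofactor ?Q r m)"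
    by (rule laplace_expansion_column[of _ "Suc m"]) (auto simp: mat_delete_def)
  also have "\<dots> = f m (Suc m) * cofactor ?Q m m"
  proof -
    have "(\<Sum>r<m. ?Q $$ (r, m) * cofactor ?Q r m) = 0"
      by (rule sum.neutral) (auto simp: mat_delete_def tri tridiag_def)
    then show ?thesis by (simp add: mat_delete_def)
  qed
  also have "cofactor ?Q m m = det (?P m)"
  proof -
    have "mat_delete ?Q m m = ?P m"
      by (rule eq_matI) (auto simp: mat_delete_def)
    then show ?thesis by (simp add: cofactor_def)
  qed
  finally have det_Q: "det ?Q = f m (Suc m) * det (?P m)" .
  have "det ?A = (\<Sum>s<Suc (Suc m). ?A $$ (Suc m, s) * cofactor ?A (Suc m) s)"
    by (rule laplace_expansion_row[of _ "Suc (Suc m)"]) auto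
  also have "\<dots> = f (Suc m) m * cofactor ?A (Suc m) m + f (Suc m) (Suc m) * cofactor ?A (Suc m) (Suc m)"
  proof -
    have "(\<Sum>s<m. ?A $$ (Suc m, s) * cofactor ?A (Suc m) s) = 0"
      by (rule sum.neutral) (auto simp: tri tridiag_def)
    then show ?thesis by simp
  qed
  also have "cofactor ?A (Suc m) (Suc m) = det (?P (Suc m))"
  proof -
    have "mat_delete ?A (Suc m) (Suc m) = ?P (Suc m)"
      by (rule eq_matI) (auto simp: mat_delete_def)
    then show ?thesis by (simp add: cofactor_def)
  qed
  finally show ?thesis
    by (simp add: cofactor_def det_Q algebra_simps)
qed

lemma det_tridiagonal:
  fixes f :: "nat \<Rightarrow> nat \<Rightarrow> 'a::comm_ring_1"
  assumes "\<And>r s. r < m \<Longrightarrow> s < m \<Longrightarrow> \<not> tridiag r s \<Longrightarrow> f r s = 0"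
  shows "det (mat m m (\<lambda>(r, s). f r s)) = continuant (\<lambda>i. f i i) (\<lambda>i. f i (i - 1) * f (i - 1) i) m"
  using assms
proof (induction m rule: less_induct)
  case (less m)
  consider "m = 0" | "m = 1" | m' where "m = Suc (Suc m')"
    by (metis One_nat_def not0_implies_Suc)
  then show ?case
  proof cases
    case 1
    then show ?thesis by simp
  next
    case 2
    have "mat 1 1 (\<lambda>(r, s). f r s) \<in> carrier_mat 1 1" by simp
    then show ?thesis using 2 by (subst det_def') auto
  next
    case 3
    then show ?thesis using less by (simp add: det_tridiagonal_Suc_Suc)
  qed
qed

section \<open>Continuants with nearly constant coefficients\<close>

lemma norm_two_modes_bounds:
  fixes \<mu>1 \<mu>2 x y :: complex
  assumes "cmod y \<le> cmod x"
  shows "(cmod \<mu>1 - cmod \<mu>2) * cmod x \<le> cmod (\<mu>1 * x + \<mu>2 * y)"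
    and "cmod (\<mu>1 * x + \<mu>2 * y) \<le> (cmod \<mu>1 + cmod \<mu>2) * cmod x"
  using norm_triangle_ineq2[of "\<mu>1 * x" "- \<mu>2 * y"] norm_triangle_ineq[of "\<mu>1 * x" "\<mu>2 * y"]
    mult_left_mono[OF assms, of "cmod \<mu>2"]
  by (simp_all add: norm_mult algebra_simps)

text \<open>The cone \<open>|y| \<le> |x|\<close> is invariant: the dominant mode grows by a factor at least \<open>|\<mu>1| - \<rho>\<close>,
  the other one by at most \<open>|\<mu>2| + \<rho>\<close>.\<close>

lemma dominant_mode_cone:
  fixes x y F :: "nat \<Rightarrow> complex" and \<mu>1 \<mu>2 :: complex and \<rho> :: real
  assumes x_Suc: "\<And>m. m < N \<Longrightarrow> x (Suc m) = \<mu>1 * x m + F m"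
    and y_Suc: "\<And>m. m < N \<Longrightarrow> y (Suc m) = \<mu>2 * y m - F m"
    and F: "\<And>m. m < N \<Longrightarrow> cmod (y m) \<le> cmod (x m) \<Longrightarrow> cmod (F m) \<le> \<rho> * cmod (x m)"
    and gap: "cmod \<mu>2 + \<rho> \<le> cmod \<mu>1 - \<rho>" and "0 \<le> \<rho>"
    and y0: "cmod (y 0) \<le> cmod (x 0)"
  shows "m \<le> N \<Longrightarrow> cmod (y m) \<le> cmod (x m) \<and> (cmod \<mu>1 - \<rho>) ^ m * cmod (x 0) \<le> cmod (x m)
           \<and> cmod (x m) \<le> (cmod \<mu>1 + \<rho>) ^ m * cmod (x 0)"
proof (induction m)
  case 0
  show ?case using y0 by simp
next
  case (Suc m)
  then have m: "m < N" by simp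
  with Suc.IH have IH: "cmod (y m) \<le> cmod (x m)" "(cmod \<mu>1 - \<rho>) ^ m * cmod (x 0) \<le> cmod (x m)"
      "cmod (x m) \<le> (cmod \<mu>1 + \<rho>) ^ m * cmod (x 0)"
    by auto
  have Fm: "cmod (F m) \<le> \<rho> * cmod (x m)" using F m IH(1) .
  have "cmod \<mu>1 * cmod (x m) \<le> cmod (x (Suc m)) + cmod (F m)"
    using norm_triangle_ineq4[of "\<mu>1 * x m + F m" "F m"] by (simp add: x_Suc[OF m] norm_mult)
  then have lo: "(cmod \<mu>1 - \<rho>) * cmod (x m) \<le> cmod (x (Suc m))"
    using Fm by (simp add: algebra_simps)
  have "cmod (x (Suc m)) \<le> cmod \<mu>1 * cmod (x m) + cmod (F m)"
    using norm_triangle_ineq[of "\<mu>1 * x m" "F m"] by (simp add: x_Suc[OF m] norm_mult)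
  then have up: "cmod (x (Suc m)) \<le> (cmod \<mu>1 + \<rho>) * cmod (x m)"
    using Fm by (simp add: algebra_simps)
  have "cmod (y (Suc m)) \<le> cmod \<mu>2 * cmod (y m) + cmod (F m)"
    using norm_triangle_ineq4[of "\<mu>2 * y m" "F m"] by (simp add: y_Suc[OF m] norm_mult)
  also have "\<dots> \<le> (cmod \<mu>2 + \<rho>) * cmod (x m)"
    using IH(1) Fm mult_left_mono[OF IH(1), of "cmod \<mu>2"] by (simp add: algebra_simps)
  also have "\<dots> \<le> (cmod \<mu>1 - \<rho>) * cmod (x m)"
    using gap by (simp add: mult_right_mono)
  finally have cone: "cmod (y (Suc m)) \<le> cmod (x (Suc m))" using lo by linarith
  have "0 \<le> cmod \<mu>1 - \<rho>" using gap norm_ge_zero[of \<mu>2] \<open>0 \<le> \<rho>\<close> by linarith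
  then have "(cmod \<mu>1 - \<rho>) ^ Suc m * cmod (x 0) \<le> (cmod \<mu>1 - \<rho>) * cmod (x m)"
    using mult_left_mono[OF IH(2)] by (simp add: mult.assoc)
  moreover have "(cmod \<mu>1 + \<rho>) * cmod (x m) \<le> (cmod \<mu>1 + \<rho>) ^ Suc m * cmod (x 0)"
    using mult_left_mono[OF IH(3), of "cmod \<mu>1 + \<rho>"] \<open>0 \<le> \<rho>\<close> by (simp add: mult.assoc)
  ultimately show ?case using cone lo up by linarith
qed

lemma continuant_dominant_mode:
  fixes \<alpha> \<beta> :: "nat \<Rightarrow> complex" and \<mu>1 \<mu>2 :: complex and \<eta> :: real
  defines "\<rho> \<equiv> \<eta> * (cmod \<mu>1 + cmod \<mu>2 + 2) / cmod (\<mu>1 - \<mu>2)"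
  assumes "\<mu>1 \<noteq> \<mu>2" and gap: "cmod \<mu>2 + \<rho> \<le> cmod \<mu>1 - \<rho>" and "0 \<le> \<eta>"
    and \<alpha>: "\<And>m. m < N \<Longrightarrow> cmod (\<alpha> m - (\<mu>1 + \<mu>2)) \<le> \<eta>"
    and \<beta>: "\<And>m. 0 < m \<Longrightarrow> m < N \<Longrightarrow> cmod (\<beta> m - \<mu>1 * \<mu>2) \<le> \<eta>"
  obtains x y where "continuant \<alpha> \<beta> N = \<mu>1 * x + \<mu>2 * y" "cmod y \<le> cmod x"
    "(cmod \<mu>1 - \<rho>) ^ N \<le> cmod (\<mu>1 - \<mu>2) * cmod x" "cmod (\<mu>1 - \<mu>2) * cmod x \<le> (cmod \<mu>1 + \<rho>) ^ N"
proof -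
  define \<Delta> where "\<Delta> = \<mu>1 - \<mu>2"
  have \<Delta>: "\<Delta> \<noteq> 0" using \<open>\<mu>1 \<noteq> \<mu>2\<close> by (simp add: \<Delta>_def)
  txt \<open>\<open>E\<close> is the continuant shifted by one, so that the recurrence holds from \<open>m = 0\<close> on (and
    \<open>\<beta> 0\<close> is irrelevant); \<open>x m\<close> and \<open>y m\<close> are the coordinates of \<open>(E m, E (m + 1))\<close> along the
    modes \<open>\<mu>1\<^sup>m\<close> and \<open>\<mu>2\<^sup>m\<close> of the unperturbed recurrence.\<close>
  define E where "E m = (if m = 0 then 0 else continuant \<alpha> \<beta> (m - 1))" for m
  define \<beta>' where "\<beta>' = \<beta>(0 := \<mu>1 * \<mu>2)"
  have E_rec: "E (Suc (Suc m)) = \<alpha> m * E (Suc m) - \<beta>' m * E m" for m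
    by (cases m) (simp_all add: E_def \<beta>'_def)
  define x where "x m = (E (Suc m) - \<mu>2 * E m) / \<Delta>" for m
  define y where "y m = (\<mu>1 * E m - E (Suc m)) / \<Delta>" for m
  define F where "F m = ((\<alpha> m - (\<mu>1 + \<mu>2)) * E (Suc m) - (\<beta>' m - \<mu>1 * \<mu>2) * E m) / \<Delta>" for m
  have E_x_y: "E m = x m + y m" and E_Suc_x_y: "E (Suc m) = \<mu>1 * x m + \<mu>2 * y m" for m
    using \<Delta> by (simp_all add: x_def y_def field_simps) (simp_all add: \<Delta>_def algebra_simps)
  have x_Suc: "x (Suc m) = \<mu>1 * x m + F m" and y_Suc: "y (Suc m) = \<mu>2 * y m - F m" for m
    using \<Delta> by (simp_all add: x_def y_def F_def E_rec field_simps)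
  have F: "cmod (F m) \<le> \<rho> * cmod (x m)" if "m < N" "cmod (y m) \<le> cmod (x m)" for m
  proof -
    have E_Suc: "cmod (E (Suc m)) \<le> (cmod \<mu>1 + cmod \<mu>2) * cmod (x m)"
      unfolding E_Suc_x_y by (rule norm_two_modes_bounds(2)[OF that(2)])
    have E_m: "cmod (E m) \<le> 2 * cmod (x m)"
      using norm_triangle_ineq[of "x m" "y m"] that(2) by (simp add: E_x_y)
    have \<beta>'_m: "cmod (\<beta>' m - \<mu>1 * \<mu>2) \<le> \<eta>"
      using \<beta> that(1) \<open>0 \<le> \<eta>\<close> by (cases m) (auto simp: \<beta>'_def)
    have "cmod (F m) * cmod \<Delta> \<le> \<eta> * cmod (E (Suc m)) + \<eta> * cmod (E m)"
      using norm_triangle_ineq4[of "(\<alpha> m - (\<mu>1 + \<mu>2)) * E (Suc m)" "(\<beta>' m - \<mu>1 * \<mu>2) * E m"]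
        mult_right_mono[OF \<alpha>[OF that(1)] norm_ge_zero[of "E (Suc m)"]]
        mult_right_mono[OF \<beta>'_m norm_ge_zero[of "E m"]]
      using \<Delta> by (simp add: F_def norm_mult norm_divide)
    also have "\<dots> \<le> \<eta> * ((cmod \<mu>1 + cmod \<mu>2 + 2) * cmod (x m))"
      using add_mono[OF mult_left_mono[OF E_Suc \<open>0 \<le> \<eta>\<close>] mult_left_mono[OF E_m \<open>0 \<le> \<eta>\<close>]]
      by (simp add: algebra_simps)
    finally show ?thesis
      using \<Delta> by (simp add: \<rho>_def \<Delta>_def field_simps)
  qed
  have "0 \<le> \<rho>" using \<open>0 \<le> \<eta>\<close> by (simp add: \<rho>_def)
  have x0: "cmod (x 0) = 1 / cmod \<Delta>" and y0: "cmod (y 0) = 1 / cmod \<Delta>"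
    by (simp_all add: x_def y_def E_def norm_divide)
  have "cmod (y N) \<le> cmod (x N) \<and> (cmod \<mu>1 - \<rho>) ^ N * cmod (x 0) \<le> cmod (x N)
      \<and> cmod (x N) \<le> (cmod \<mu>1 + \<rho>) ^ N * cmod (x 0)"
    by (rule dominant_mode_cone[where x = x and y = y and F = F and N = N])
      (use x_Suc y_Suc F gap \<open>0 \<le> \<rho>\<close> x0 y0 in auto)
  then have "cmod (y N) \<le> cmod (x N)" "(cmod \<mu>1 - \<rho>) ^ N \<le> cmod \<Delta> * cmod (x N)"
      "cmod \<Delta> * cmod (x N) \<le> (cmod \<mu>1 + \<rho>) ^ N"
    using \<Delta> by (auto simp: x0 field_simps)
  moreover have "continuant \<alpha> \<beta> N = \<mu>1 * x N + \<mu>2 * y N"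
    using E_Suc_x_y[of N] by (simp add: E_def)
  ultimately show thesis
    by (intro that[of "x N" "y N"]) (simp_all add: \<Delta>_def)
qed

lemma norm_continuant_bounds:
  fixes \<alpha> \<beta> :: "nat \<Rightarrow> complex" and \<mu>1 \<mu>2 :: complex and \<eta> :: real
  defines "\<rho> \<equiv> \<eta> * (cmod \<mu>1 + cmod \<mu>2 + 2) / cmod (\<mu>1 - \<mu>2)"
  assumes "\<mu>1 \<noteq> \<mu>2" and gap: "cmod \<mu>2 + \<rho> \<le> cmod \<mu>1 - \<rho>" and "0 \<le> \<eta>"
    and \<alpha>: "\<And>m. m < N \<Longrightarrow> cmod (\<alpha> m - (\<mu>1 + \<mu>2)) \<le> \<eta>"
    and \<beta>: "\<And>m. 0 < m \<Longrightarrow> m < N \<Longrightarrow> cmod (\<beta> m - \<mu>1 * \<mu>2) \<le> \<eta>"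
  shows "(cmod \<mu>1 - cmod \<mu>2) * (cmod \<mu>1 - \<rho>) ^ N \<le> cmod (\<mu>1 - \<mu>2) * cmod (continuant \<alpha> \<beta> N)"
    and "cmod (\<mu>1 - \<mu>2) * cmod (continuant \<alpha> \<beta> N) \<le> (cmod \<mu>1 + cmod \<mu>2) * (cmod \<mu>1 + \<rho>) ^ N"
proof -
  obtain x y where D: "continuant \<alpha> \<beta> N = \<mu>1 * x + \<mu>2 * y" and "cmod y \<le> cmod x"
    and cone: "(cmod \<mu>1 - \<rho>) ^ N \<le> cmod (\<mu>1 - \<mu>2) * cmod x" "cmod (\<mu>1 - \<mu>2) * cmod x \<le> (cmod \<mu>1 + \<rho>) ^ N"
    by (rule continuant_dominant_mode[OF \<open>\<mu>1 \<noteq> \<mu>2\<close> gap[unfolded \<rho>_def] \<open>0 \<le> \<eta>\<close> \<alpha> \<beta>,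
          folded \<rho>_def])
  note lower = norm_two_modes_bounds(1)[OF \<open>cmod y \<le> cmod x\<close>, of \<mu>1 \<mu>2, folded D]
  note upper = norm_two_modes_bounds(2)[OF \<open>cmod y \<le> cmod x\<close>, of \<mu>1 \<mu>2, folded D]
  have "0 \<le> \<rho>" using \<open>0 \<le> \<eta>\<close> by (simp add: \<rho>_def)
  then have "0 \<le> cmod \<mu>1 - cmod \<mu>2" using gap by linarith
  then have "(cmod \<mu>1 - cmod \<mu>2) * (cmod \<mu>1 - \<rho>) ^ N \<le> (cmod \<mu>1 - cmod \<mu>2) * (cmod (\<mu>1 - \<mu>2) * cmod x)"
    by (rule mult_left_mono[OF cone(1)])
  also have "\<dots> \<le> cmod (\<mu>1 - \<mu>2) * cmod (continuant \<alpha> \<beta> N)"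
    using mult_left_mono[OF lower, of "cmod (\<mu>1 - \<mu>2)"] by (simp add: ac_simps)
  finally show "(cmod \<mu>1 - cmod \<mu>2) * (cmod \<mu>1 - \<rho>) ^ N \<le> cmod (\<mu>1 - \<mu>2) * cmod (continuant \<alpha> \<beta> N)" .
  have "cmod (\<mu>1 - \<mu>2) * cmod (continuant \<alpha> \<beta> N) \<le> (cmod \<mu>1 + cmod \<mu>2) * (cmod (\<mu>1 - \<mu>2) * cmod x)"
    using mult_left_mono[OF upper, of "cmod (\<mu>1 - \<mu>2)"] by (simp add: ac_simps)
  also have "\<dots> \<le> (cmod \<mu>1 + cmod \<mu>2) * (cmod \<mu>1 + \<rho>) ^ N"
    by (rule mult_left_mono[OF cone(2)]) simp
  finally show "cmod (\<mu>1 - \<mu>2) * cmod (continuant \<alpha> \<beta> N) \<le> (cmod \<mu>1 + cmod \<mu>2) * (cmod \<mu>1 + \<rho>) ^ N" .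
qed

lemma abs_ln_sub_le_of_geometric_bounds:
  fixes A B q e X :: real
  assumes "0 < A" "0 < B" "0 < q"
    and lower: "A * (q * exp (- e)) ^ N \<le> X" and upper: "X \<le> B * (q * exp e) ^ N"
  shows "\<bar>ln X - N * ln q\<bar> \<le> N * e + \<bar>ln A\<bar> + \<bar>ln B\<bar>"
proof -
  have "0 < A * (q * exp (- e)) ^ N" using assms by simp
  then have "ln (A * (q * exp (- e)) ^ N) \<le> ln X" using lower by (subst ln_le_cancel_iff) auto
  then have "ln A + N * ln q - N * e \<le> ln X"
    using assms by (simp add: ln_mult ln_realpow algebra_simps)
  moreover have "ln X \<le> ln (B * (q * exp e) ^ N)"
    using upper \<open>0 < A * _\<close> lower by (subst ln_le_cancel_iff) auto
  then have "ln X \<le> ln B + N * ln q + N * e"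
    using assms by (simp add: ln_mult ln_realpow algebra_simps)
  ultimately show ?thesis
    using abs_ge_self[of "ln B"] abs_ge_minus_self[of "ln A"] abs_ge_zero[of "ln A"]
      abs_ge_zero[of "ln B"]
    unfolding abs_le_iff by (intro conjI; linarith)
qed

lemma obtain_radius_within_exp:
  fixes q r e :: real
  assumes "r < q" "0 < q" "0 < e"
  obtains \<rho> where "0 < \<rho>" "r + \<rho> \<le> q - \<rho>" "q * exp (- e) \<le> q - \<rho>" "q + \<rho> \<le> q * exp e"
proof
  define \<rho> where "\<rho> = min ((q - r) / 2) (q * min (1 - exp (- e)) (exp e - 1))"
  show "0 < \<rho>" using assms by (simp add: \<rho>_def)
  have "\<rho> \<le> (q - r) / 2" unfolding \<rho>_def by (rule min.cobounded1)
  then show "r + \<rho> \<le> q - \<rho>" by simp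
  have "\<rho> \<le> q * min (1 - exp (- e)) (exp e - 1)"
    unfolding \<rho>_def by (rule min.cobounded2)
  then have "\<rho> \<le> q * (1 - exp (- e))" "\<rho> \<le> q * (exp e - 1)"
    using \<open>0 < q\<close> by (meson min.cobounded1 min.cobounded2 mult_left_mono order_trans less_imp_le)+
  then show "q * exp (- e) \<le> q - \<rho>" "q + \<rho> \<le> q * exp e"
    by (simp_all add: algebra_simps)
qed

lemma ln_norm_continuant_asymptotics:
  fixes \<mu>1 \<mu>2 :: complex and \<epsilon> :: real
  assumes lt: "cmod \<mu>2 < cmod \<mu>1" and "0 < \<epsilon>"
  obtains \<eta> K0 where "0 < \<eta>"
    and "\<And>N \<alpha> \<beta>. K0 \<le> N \<Longrightarrow> (\<And>m. m < N \<Longrightarrow> cmod (\<alpha> m - (\<mu>1 + \<mu>2)) \<le> \<eta>) \<Longrightarrow>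
           (\<And>m. 0 < m \<Longrightarrow> m < N \<Longrightarrow> cmod (\<beta> m - \<mu>1 * \<mu>2) \<le> \<eta>) \<Longrightarrow>
           continuant \<alpha> \<beta> N \<noteq> 0 \<and> \<bar>ln (cmod (continuant \<alpha> \<beta> N)) - N * ln (cmod \<mu>1)\<bar> < N * \<epsilon>"
proof -
  define q r where "q = cmod \<mu>1" and "r = cmod \<mu>2"
  define \<delta> where "\<delta> = cmod (\<mu>1 - \<mu>2)"
  have "0 \<le> r" "r < q" "0 < q" "0 < \<delta>" using lt by (auto simp: q_def r_def \<delta>_def)
  obtain \<rho> where "0 < \<rho>" and gap: "r + \<rho> \<le> q - \<rho>"
    and lower_base: "q * exp (- (\<epsilon> / 2)) \<le> q - \<rho>" and upper_base: "q + \<rho> \<le> q * exp (\<epsilon> / 2)"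
    using obtain_radius_within_exp[OF \<open>r < q\<close> \<open>0 < q\<close> half_gt_zero[OF \<open>0 < \<epsilon>\<close>]] .
  define \<eta> where "\<eta> = \<rho> * \<delta> / (q + r + 2)"
  have "0 < \<eta>" using \<open>0 < \<rho>\<close> \<open>0 < \<delta>\<close> \<open>0 \<le> r\<close> \<open>0 < q\<close> by (simp add: \<eta>_def)
  have \<rho>_eq: "\<rho> = \<eta> * (q + r + 2) / \<delta>"
    using \<open>0 < \<delta>\<close> \<open>0 \<le> r\<close> \<open>0 < q\<close> by (simp add: \<eta>_def)
  define A B where "A = (q - r) / \<delta>" and "B = (q + r) / \<delta>"
  have "0 < A" "0 < B" using \<open>r < q\<close> \<open>0 \<le> r\<close> \<open>0 < \<delta>\<close> by (simp_all add: A_def B_def)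
  define K0 where "K0 = nat \<lceil>2 * (\<bar>ln A\<bar> + \<bar>ln B\<bar>) / \<epsilon>\<rceil> + 1"
  show thesis
  proof (rule that[OF \<open>0 < \<eta>\<close>])
    fix N \<alpha> \<beta>
    assume "K0 \<le> N" and \<alpha>: "\<And>m. m < N \<Longrightarrow> cmod (\<alpha> m - (\<mu>1 + \<mu>2)) \<le> \<eta>"
      and \<beta>: "\<And>m. 0 < m \<Longrightarrow> m < N \<Longrightarrow> cmod (\<beta> m - \<mu>1 * \<mu>2) \<le> \<eta>"
    let ?D = "cmod (continuant \<alpha> \<beta> N)"
    have "\<mu>1 \<noteq> \<mu>2" using lt by auto
    then have bounds: "(q - r) * (q - \<rho>) ^ N \<le> \<delta> * ?D" "\<delta> * ?D \<le> (q + r) * (q + \<rho>) ^ N"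
      using norm_continuant_bounds[of \<mu>1 \<mu>2 \<eta> N \<alpha> \<beta>] gap \<open>0 < \<eta>\<close> \<alpha> \<beta>
      unfolding \<rho>_eq q_def r_def \<delta>_def by auto
    have "A * (q * exp (- (\<epsilon> / 2))) ^ N \<le> A * (q - \<rho>) ^ N"
      using lower_base \<open>0 < A\<close> \<open>0 < q\<close> by (intro mult_left_mono power_mono) auto
    also have "\<dots> \<le> ?D"
      using bounds(1) gap \<open>0 < \<eta>\<close> \<open>0 < \<delta>\<close> by (simp add: A_def field_simps)
    finally have lower: "A * (q * exp (- (\<epsilon> / 2))) ^ N \<le> ?D" .
    have "?D \<le> B * (q + \<rho>) ^ N"
      using bounds(2) gap \<open>0 < \<eta>\<close> \<open>0 < \<delta>\<close> by (simp add: B_def field_simps)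
    also have "\<dots> \<le> B * (q * exp (\<epsilon> / 2)) ^ N"
      using upper_base \<open>0 < B\<close> \<open>0 < \<rho>\<close> \<open>0 < q\<close> by (intro mult_left_mono power_mono) auto
    finally have upper: "?D \<le> B * (q * exp (\<epsilon> / 2)) ^ N" .
    have "0 < A * (q * exp (- (\<epsilon> / 2))) ^ N" using \<open>0 < A\<close> \<open>0 < q\<close> by simp
    with lower have "0 < ?D" by linarith
    have "\<bar>ln ?D - N * ln q\<bar> \<le> N * (\<epsilon> / 2) + \<bar>ln A\<bar> + \<bar>ln B\<bar>"
      by (rule abs_ln_sub_le_of_geometric_bounds[OF \<open>0 < A\<close> \<open>0 < B\<close> \<open>0 < q\<close> lower upper])
    also have "\<dots> < N * \<epsilon>"
    proof -
      have "2 * (\<bar>ln A\<bar> + \<bar>ln B\<bar>) / \<epsilon> < N" using \<open>K0 \<le> N\<close> by (simp add: K0_def) linarith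
      then show ?thesis using \<open>0 < \<epsilon>\<close> by (simp add: field_simps)
    qed
    finally show "continuant \<alpha> \<beta> N \<noteq> 0 \<and> \<bar>ln ?D - N * ln (cmod \<mu>1)\<bar> < N * \<epsilon>"
      using \<open>0 < ?D\<close> by (simp add: q_def)
  qed
qed

lemma norm_mult_sub_mult_le:
  fixes u v c d :: "'a::real_normed_field"
  assumes "norm (u - c) \<le> t" "norm (v - d) \<le> t"
  shows "norm (u * v - c * d) \<le> t * (norm c + norm d) + t * t"
proof -
  have "u * v - c * d = c * (v - d) + (u - c) * d + (u - c) * (v - d)" by (simp add: algebra_simps)
  then have "norm (u * v - c * d) \<le> norm c * norm (v - d) + norm (u - c) * norm d + norm (u - c) * norm (v - d)"
    by (metis norm_mult norm_triangle_le order_refl add_mono)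
  also have "\<dots> \<le> norm c * t + t * norm d + t * t"
    using assms order_trans[OF norm_ge_zero assms(1)] by (intro add_mono mult_mono mult_left_mono) auto
  finally show ?thesis by (simp add: algebra_simps)
qed

definition near_toeplitz_tridiagonal :: "real \<Rightarrow> complex \<Rightarrow> complex \<Rightarrow> complex \<Rightarrow> complex mat \<Rightarrow> bool"
  where "near_toeplitz_tridiagonal t w c0 d0 A \<longleftrightarrow>
    (\<forall>r<dim_row A. \<forall>s<dim_row A. \<not> tridiag r s \<longrightarrow> A $$ (r, s) = 0) \<and>
    (\<forall>i<dim_row A. cmod (A $$ (i, i) - w) \<le> t) \<and>
    (\<forall>i. Suc i < dim_row A \<longrightarrow> cmod (A $$ (Suc i, i) - c0) \<le> t \<and> cmod (A $$ (i, Suc i) - d0) \<le> t)"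

lemma ln_det_near_toeplitz_tridiagonal:
  fixes \<mu>1 \<mu>2 c0 d0 :: complex and \<epsilon> :: real
  assumes "cmod \<mu>2 < cmod \<mu>1" and cd: "c0 * d0 = \<mu>1 * \<mu>2" and "0 < \<epsilon>"
  obtains t K0 where "0 < t"
    and "\<And>K A. K0 \<le> K \<Longrightarrow> A \<in> carrier_mat K K \<Longrightarrow> near_toeplitz_tridiagonal t (\<mu>1 + \<mu>2) c0 d0 A \<Longrightarrow>
           det A \<noteq> 0 \<and> \<bar>ln (cmod (det A)) - K * ln (cmod \<mu>1)\<bar> < K * \<epsilon>"
proof -
  obtain \<eta> K0 where "0 < \<eta>" and growth: "\<And>N \<alpha> \<beta>. K0 \<le> N \<Longrightarrow>
      (\<And>m. m < N \<Longrightarrow> cmod (\<alpha> m - (\<mu>1 + \<mu>2)) \<le> \<eta>) \<Longrightarrow>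
      (\<And>m. 0 < m \<Longrightarrow> m < N \<Longrightarrow> cmod (\<beta> m - \<mu>1 * \<mu>2) \<le> \<eta>) \<Longrightarrow>
      continuant \<alpha> \<beta> N \<noteq> 0 \<and> \<bar>ln (cmod (continuant \<alpha> \<beta> N)) - N * ln (cmod \<mu>1)\<bar> < N * \<epsilon>"
    using ln_norm_continuant_asymptotics[OF assms(1,3)] by blast
  define S where "S = cmod c0 + cmod d0"
  define t where "t = min 1 (\<eta> / (S + 1))"
  have "0 \<le> S" by (simp add: S_def)
  have "0 < t" "t \<le> 1" using \<open>0 < \<eta>\<close> \<open>0 \<le> S\<close> by (simp_all add: t_def)
  have "t \<le> \<eta> / (S + 1)" by (simp add: t_def)
  then have "t * (S + 1) \<le> \<eta>" using \<open>0 \<le> S\<close> by (simp add: pos_le_divide_eq)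
  moreover have "t * t \<le> t" using \<open>t \<le> 1\<close> \<open>0 < t\<close> by (simp add: mult_left_le)
  moreover have "0 \<le> t * S" using \<open>0 \<le> S\<close> \<open>0 < t\<close> by simp
  ultimately have "t \<le> \<eta>" and t_prod: "t * S + t * t \<le> \<eta>"
    by (simp_all add: algebra_simps)
  show thesis
  proof (rule that[OF \<open>0 < t\<close>])
    fix K and A :: "complex mat"
    assume "K0 \<le> K" and A: "A \<in> carrier_mat K K" and near: "near_toeplitz_tridiagonal t (\<mu>1 + \<mu>2) c0 d0 A"
    have "A = mat K K (\<lambda>(r, s). A $$ (r, s))" using A by (auto intro: eq_matI)
    then have det_A: "det A = continuant (\<lambda>i. A $$ (i, i)) (\<lambda>i. A $$ (i, i - 1) * A $$ (i - 1, i)) K"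
      using det_tridiagonal[of K "\<lambda>r s. A $$ (r, s)"] A near
      by (simp add: near_toeplitz_tridiagonal_def)
    have diag: "cmod (A $$ (i, i) - (\<mu>1 + \<mu>2)) \<le> \<eta>" if "i < K" for i
      using near that A \<open>t \<le> \<eta>\<close> by (auto simp: near_toeplitz_tridiagonal_def)
    have offdiag: "cmod (A $$ (i, i - 1) * A $$ (i - 1, i) - \<mu>1 * \<mu>2) \<le> \<eta>" if "0 < i" "i < K" for i
    proof -
      obtain i' where i: "i = Suc i'" using \<open>0 < i\<close> gr0_implies_Suc by blast
      have "cmod (A $$ (Suc i', i') - c0) \<le> t" "cmod (A $$ (i', Suc i') - d0) \<le> t"
        using near that A by (auto simp: near_toeplitz_tridiagonal_def i)
      then have "cmod (A $$ (Suc i', i') * A $$ (i', Suc i') - c0 * d0) \<le> t * S + t * t"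
        unfolding S_def by (rule norm_mult_sub_mult_le)
      then show ?thesis using t_prod cd by (simp add: i)
    qed
    show "det A \<noteq> 0 \<and> \<bar>ln (cmod (det A)) - K * ln (cmod \<mu>1)\<bar> < K * \<epsilon>"
      unfolding det_A by (rule growth[OF \<open>K0 \<le> K\<close> diag offdiag])
  qed
qed

section \<open>The roots of the symbol\<close>

definition root_plus :: "complex \<Rightarrow> complex \<Rightarrow> complex" where
  "root_plus w p = (w + csqrt (w\<^sup>2 - 4 * p)) / 2"

definition root_minus :: "complex \<Rightarrow> complex \<Rightarrow> complex" where
  "root_minus w p = (w - csqrt (w\<^sup>2 - 4 * p)) / 2"

definition dominant_root_norm :: "complex \<Rightarrow> complex \<Rightarrow> real" where
  "dominant_root_norm w p = max (cmod (root_plus w p)) (cmod (root_minus w p))"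

lemma root_plus_add_root_minus: "root_plus w p + root_minus w p = w"
  by (simp add: root_plus_def root_minus_def field_simps)

lemma root_plus_mult_root_minus: "root_plus w p * root_minus w p = p"
proof -
  have "root_plus w p * root_minus w p = (w\<^sup>2 - (csqrt (w\<^sup>2 - 4 * p))\<^sup>2) / 4"
    by (simp add: root_plus_def root_minus_def power2_eq_square field_simps)
  also have "\<dots> = p" by (simp add: power2_csqrt)
  finally show ?thesis .
qed

lemma norm_root_plus_squared_add_norm_root_minus_squared:
  "(cmod (root_plus w p))\<^sup>2 + (cmod (root_minus w p))\<^sup>2 = ((cmod w)\<^sup>2 + cmod (w\<^sup>2 - 4 * p)) / 2"
proof -
  let ?s = "csqrt (w\<^sup>2 - 4 * p)"
  have "(cmod (w + ?s))\<^sup>2 + (cmod (w - ?s))\<^sup>2 = 2 * (cmod w)\<^sup>2 + 2 * (cmod ?s)\<^sup>2"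
    unfolding cmod_power2 by (simp add: power2_eq_square algebra_simps)
  moreover have "(cmod ?s)\<^sup>2 = cmod (w\<^sup>2 - 4 * p)"
    by (simp add: norm_power[symmetric] power2_csqrt)
  ultimately show ?thesis
    by (simp add: root_plus_def root_minus_def norm_divide power_divide)
qed

text \<open>Although \<^const>\<open>csqrt\<close> is discontinuous, the larger modulus of the two roots is not: its
  square is the larger root of \<open>X\<^sup>2 - S X + |p|\<^sup>2\<close>, where \<open>S\<close> is the sum of the squared moduli.\<close>

lemma dominant_root_norm_eq:
  fixes w p :: complex
  defines "S \<equiv> ((cmod w)\<^sup>2 + cmod (w\<^sup>2 - 4 * p)) / 2"
  shows "dominant_root_norm w p = sqrt ((S + sqrt (S\<^sup>2 - 4 * (cmod p)\<^sup>2)) / 2)"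
proof -
  define a b where "a = (cmod (root_plus w p))\<^sup>2" and "b = (cmod (root_minus w p))\<^sup>2"
  have sum: "a + b = S" unfolding a_def b_def S_def
    by (rule norm_root_plus_squared_add_norm_root_minus_squared)
  have prod: "a * b = (cmod p)\<^sup>2" unfolding a_def b_def
    by (simp add: power_mult_distrib[symmetric] norm_mult[symmetric] root_plus_mult_root_minus)
  have "S\<^sup>2 - 4 * (cmod p)\<^sup>2 = (a - b)\<^sup>2"
    unfolding sum[symmetric] prod[symmetric] by (simp add: power2_eq_square algebra_simps)
  then have "sqrt (S\<^sup>2 - 4 * (cmod p)\<^sup>2) = \<bar>a - b\<bar>" by simp
  moreover have "max a b = (a + b + \<bar>a - b\<bar>) / 2" by (auto simp: max_def abs_if)
  moreover have "dominant_root_norm w p = sqrt (max a b)"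
    by (auto simp: dominant_root_norm_def a_def b_def max_def)
  ultimately show ?thesis using sum by simp
qed

lemma continuous_on_dominant_root_norm:
  assumes "continuous_on S w" "continuous_on S p"
  shows "continuous_on S (\<lambda>x. dominant_root_norm (w x) (p x))"
  unfolding dominant_root_norm_eq by (intro continuous_intros assms) auto

lemma dominant_root_norm_pos:
  assumes "p \<noteq> 0"
  shows "0 < dominant_root_norm w p"
proof -
  have "root_plus w p \<noteq> 0" using assms root_plus_mult_root_minus[of w p] by auto
  then show ?thesis by (simp add: dominant_root_norm_def less_max_iff_disj)
qed

lemma obtain_dominant_root:
  assumes "cmod (root_plus w p) \<noteq> cmod (root_minus w p)"
  obtains \<mu>1 \<mu>2 where "\<mu>1 + \<mu>2 = w" "\<mu>1 * \<mu>2 = p" "cmod \<mu>2 < cmod \<mu>1"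
    "cmod \<mu>1 = dominant_root_norm w p"
proof (cases "cmod (root_minus w p) < cmod (root_plus w p)")
  case True
  show ?thesis
  proof (rule that)
    show "root_plus w p + root_minus w p = w" "root_plus w p * root_minus w p = p"
      by (rule root_plus_add_root_minus root_plus_mult_root_minus)+
    show "cmod (root_plus w p) = dominant_root_norm w p"
      using True by (simp add: dominant_root_norm_def)
  qed (rule True)
next
  case False
  then have lt: "cmod (root_plus w p) < cmod (root_minus w p)" using assms by linarith
  show ?thesis
  proof (rule that)
    show "root_minus w p + root_plus w p = w" "root_minus w p * root_plus w p = p"
      using root_plus_add_root_minus[of w p] root_plus_mult_root_minus[of w p]
      by (simp_all only: add.commute mult.commute)
    show "cmod (root_minus w p) = dominant_root_norm w p"
      using lt by (simp add: dominant_root_norm_def)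
  qed (rule lt)
qed

lemma quadratic_roots:
  fixes c w d :: complex
  assumes "c \<noteq> 0"
  shows "{l. c * l\<^sup>2 + w * l + d = 0} = {- root_plus w (c * d) / c, - root_minus w (c * d) / c}"
proof -
  let ?u = "root_plus w (c * d)" and ?v = "root_minus w (c * d)"
  have factor: "c * (c * l\<^sup>2 + w * l + d) = (c * l + ?u) * (c * l + ?v)" for l
  proof -
    have "(c * l + ?u) * (c * l + ?v) = (c * l)\<^sup>2 + (?u + ?v) * (c * l) + ?u * ?v"
      by (simp add: power2_eq_square algebra_simps)
    also have "\<dots> = c * (c * l\<^sup>2 + w * l + d)"
      unfolding root_plus_add_root_minus root_plus_mult_root_minus
      by (simp add: power2_eq_square algebra_simps)
    finally show ?thesis by simp
  qed
  have "c * l\<^sup>2 + w * l + d = 0 \<longleftrightarrow> c * l + ?u = 0 \<or> c * l + ?v = 0" for l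
    using assms factor[of l] by (metis mult_eq_0_iff)
  moreover have "c * l + x = 0 \<longleftrightarrow> l = - x / c" for l x
    using assms by (auto simp: field_simps) (simp add: eq_neg_iff_add_eq_0 add.commute)
  ultimately show ?thesis by auto
qed

lemma gamma_fn_eq_ln_dominant_root_norm:
  assumes "c x \<noteq> 0" "d x \<noteq> 0"
  shows "gamma_fn b c d x z = ln (dominant_root_norm (b x - z) (c x * d x))"
proof -
  let ?w = "b x - z" and ?p = "c x * d x"
  have "Max (cmod ` {l. c x * l\<^sup>2 + ?w * l + d x = 0})
      = max (cmod (root_plus ?w ?p) / cmod (c x)) (cmod (root_minus ?w ?p) / cmod (c x))"
    using assms(1) by (simp add: quadratic_roots norm_divide)
  also have "\<dots> = dominant_root_norm ?w ?p / cmod (c x)"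
    using assms(1) by (simp add: dominant_root_norm_def max_divide_distrib_right)
  finally show ?thesis
    using assms dominant_root_norm_pos[of ?p ?w] by (simp add: gamma_fn_def ln_div)
qed

lemma continuous_on_gamma_fn:
  assumes "continuous_on {0..1} b" "continuous_on {0..1} c" "continuous_on {0..1} d"
    and "\<And>x. x \<in> {0..1} \<Longrightarrow> c x * d x \<noteq> 0"
  shows "continuous_on {0..1} (\<lambda>x. gamma_fn b c d x z)"
proof -
  have "continuous_on {0..1} (\<lambda>x. dominant_root_norm (b x - z) (c x * d x))"
    by (intro continuous_on_dominant_root_norm continuous_intros assms(1-3))
  moreover have "\<forall>x\<in>{0..1}. dominant_root_norm (b x - z) (c x * d x) \<noteq> 0"
    using dominant_root_norm_pos assms(4) by (metis less_irrefl)
  ultimately have "continuous_on {0..1} (\<lambda>x. ln (dominant_root_norm (b x - z) (c x * d x)))"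
    by (rule continuous_on_ln)
  moreover have "ln (dominant_root_norm (b x - z) (c x * d x)) = gamma_fn b c d x z"
    if "x \<in> {0..1}" for x
    using assms(4)[OF that] by (simp add: gamma_fn_eq_ln_dominant_root_norm)
  ultimately show ?thesis by (rule continuous_on_eq)
qed

text \<open>Roots of equal modulus lie on the circle \<open>|u| = sqrt |p|\<close>, and \<open>z\<close> is then the image of such
  a root \<open>u\<close> under the smooth map \<open>u \<mapsto> w - (u + p / u)\<close>; the image of a circle is negligible.\<close>

lemma AE_root_norms_distinct:
  fixes w p :: complex
  assumes "p \<noteq> 0"
  shows "AE z in lborel. cmod (root_plus (w - z) p) \<noteq> cmod (root_minus (w - z) p)"
proof -
  define R where "R = sqrt (cmod p)"
  have "0 < R" using assms by (simp add: R_def)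
  define f where "f u = w - (u + p * inverse u)" for u :: complex
  have nz: "u \<noteq> 0" if "u \<in> sphere 0 R" for u :: complex using that \<open>0 < R\<close> by auto
  have "f differentiable_on sphere 0 R"
    unfolding f_def by (intro derivative_intros) (use nz in auto)
  then have "negligible (f ` sphere 0 R)"
    by (rule negligible_differentiable_image_negligible[OF order_refl negligible_sphere])
  moreover have "continuous_on (sphere 0 R) f"
    unfolding f_def by (intro continuous_intros) (use nz in auto)
  then have "f ` sphere 0 R \<in> sets borel"
    by (intro borel_closed compact_imp_closed compact_continuous_image) auto
  ultimately have null: "f ` sphere 0 R \<in> null_sets lborel"
    by (auto simp: null_sets_completion_iff negligible_iff_null_sets)
  have "z \<in> f ` sphere 0 R" if eq: "cmod (root_plus (w - z) p) = cmod (root_minus (w - z) p)" for z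
  proof -
    let ?u = "root_plus (w - z) p" and ?v = "root_minus (w - z) p"
    have uv: "?u * ?v = p" by (rule root_plus_mult_root_minus)
    then have "(cmod ?u)\<^sup>2 = cmod p" using eq by (metis norm_mult power2_eq_square)
    then have "cmod ?u = R" unfolding R_def by (metis norm_ge_zero real_sqrt_unique)
    moreover from this have "?v = p * inverse ?u" using uv \<open>0 < R\<close> by (auto simp: field_simps)
    then have "f ?u = z"
      using root_plus_add_root_minus[of "w - z" p] by (simp add: f_def algebra_simps)
    ultimately show ?thesis by (intro image_eqI[of z f ?u]) auto
  qed
  then have "{z \<in> space lborel. \<not> cmod (root_plus (w - z) p) \<noteq> cmod (root_minus (w - z) p)}
      \<subseteq> f ` sphere 0 R"
    by blast
  then show ?thesis by (rule AE_I'[OF null])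
qed

lemma tendsto_gamma_fn_0:
  assumes "continuous_on {0..1} b" "continuous_on {0..1} c" "continuous_on {0..1} d"
    and "\<And>x. x \<in> {0..1} \<Longrightarrow> c x * d x \<noteq> 0"
    and "x \<longlonglongrightarrow> 0" "\<And>n. 0 \<le> x n"
  shows "(\<lambda>n. gamma_fn b c d (x n) z) \<longlonglongrightarrow> gamma_fn b c d 0 z"
proof -
  have "eventually (\<lambda>n. x n < 1) sequentially"
    using order_tendstoD(2)[OF \<open>x \<longlonglongrightarrow> 0\<close>, of 1] by simp
  then have "eventually (\<lambda>n. x n \<in> {0..1}) sequentially"
    by eventually_elim (simp add: assms(6) less_imp_le)
  then show ?thesis
    using continuous_on_tendsto_compose[OF continuous_on_gamma_fn[OF assms(1-4)] \<open>x \<longlonglongrightarrow> 0\<close>] by simp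
qed

section \<open>Diagonal blocks of the random matrix\<close>

lemma tridiag_add_iff [simp]: "tridiag (m + r) (m + s) \<longleftrightarrow> tridiag r s"
  by (auto simp: tridiag_def)

lemma principal_block_R_mat_minus_entry:
  fixes b c d :: "real \<Rightarrow> complex" and j K :: nat
  defines "off \<equiv> (j - 1) * K"
  assumes "off + K \<le> n" "r < K" "s < K"
  shows "(principal_block (R_mat b c d \<sigma> \<xi> n \<omega>) K j - z \<cdot>\<^sub>m 1\<^sub>m K) $$ (r, s) =
     (if r = s then b (real (off + r + 1) / real n) - z
      else if s = Suc r then d (real (off + r + 1) / real n)
      else if r = Suc s then c (real (off + s + 1) / real n) else 0)
     + (if tridiag r s then complex_of_real (\<sigma> n) * \<xi> n (off + r) (off + s) \<omega> else 0)"
proof -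
  have "principal_block A K j = mat K K (\<lambda>(r, s). A $$ (off + r, off + s))" for A
    by (simp add: principal_block_def off_def)
  moreover have "off + r < n" "off + s < n" using assms(2-4) by simp_all
  ultimately show ?thesis
    using assms(3,4) by (simp add: R_mat_def X_mat_def T_mat_def add.assoc)
qed

lemma principal_block_near_toeplitz:
  fixes b c d :: "real \<Rightarrow> complex"
  assumes "1 \<le> j" "j * K \<le> n"
    and coeff: "\<And>x. 0 \<le> x \<Longrightarrow> x \<le> real (j * K) / real n \<Longrightarrow>
       cmod (b x - b 0) < t / 2 \<and> cmod (c x - c 0) < t / 2 \<and> cmod (d x - d 0) < t / 2"
    and noise: "\<And>r s. r < K \<Longrightarrow> s < K \<Longrightarrow> tridiag r s \<Longrightarrow>
       cmod (complex_of_real (\<sigma> n) * \<xi> n ((j - 1) * K + r) ((j - 1) * K + s) \<omega>) < t / 2"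
  shows "near_toeplitz_tridiagonal t (b 0 - z) (c 0) (d 0)
           (principal_block (R_mat b c d \<sigma> \<xi> n \<omega>) K j - z \<cdot>\<^sub>m 1\<^sub>m K)"
proof -
  define off where "off = (j - 1) * K"
  have "off + K = j * K" using \<open>1 \<le> j\<close> by (cases j) (auto simp: off_def)
  let ?B = "principal_block (R_mat b c d \<sigma> \<xi> n \<omega>) K j - z \<cdot>\<^sub>m 1\<^sub>m K"
  let ?x = "\<lambda>i. real (off + i + 1) / real n"
  let ?e = "\<lambda>r s. complex_of_real (\<sigma> n) * \<xi> n (off + r) (off + s) \<omega>"
  note entry = principal_block_R_mat_minus_entry[of j K n, folded off_def,
      OF \<open>off + K = j * K\<close>[THEN ssubst, of "\<lambda>m. m \<le> n", OF \<open>j * K \<le> n\<close>]]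
  have coeff': "cmod (b (?x i) - b 0) < t / 2 \<and> cmod (c (?x i) - c 0) < t / 2 \<and> cmod (d (?x i) - d 0) < t / 2"
    if "i < K" for i
  proof (rule coeff)
    have "off + i + 1 \<le> j * K" using that \<open>off + K = j * K\<close> by simp
    then have "real (off + i + 1) \<le> real (j * K)" by (simp only: of_nat_le_iff)
    then show "?x i \<le> real (j * K) / real n" by (rule divide_right_mono) simp
  qed simp
  have noise': "cmod (?e r s) < t / 2" if "r < K" "s < K" "tridiag r s" for r s
    using noise[OF that] by (simp add: off_def)
  have near_sum: "cmod (u + v) \<le> t" if "cmod u < t / 2" "cmod v < t / 2" for u v :: complex
    using norm_triangle_lt[of u v t] that by simp
  show ?thesis
    unfolding near_toeplitz_tridiagonal_def
  proof (intro conjI allI impI)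
    fix r s assume "r < dim_row ?B" "s < dim_row ?B" "\<not> tridiag r s"
    then have "r < K" "s < K" by simp_all
    then show "?B $$ (r, s) = 0"
      unfolding entry[OF \<open>r < K\<close> \<open>s < K\<close>] using \<open>\<not> tridiag r s\<close> by (simp add: tridiag_def)
  next
    fix i assume "i < dim_row ?B"
    then have i: "i < K" by simp
    have "tridiag i i" by (simp add: tridiag_def)
    have "?B $$ (i, i) - (b 0 - z) = (b (?x i) - b 0) + ?e i i"
      by (simp add: entry[OF i i] tridiag_def)
    then show "cmod (?B $$ (i, i) - (b 0 - z)) \<le> t"
      using near_sum[OF conjunct1[OF coeff'[OF i]] noise'[OF i i \<open>tridiag i i\<close>]] by (simp only:)
  next
    fix i assume "Suc i < dim_row ?B"
    then have i: "Suc i < K" "i < K" by simp_all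
    have "?B $$ (Suc i, i) - c 0 = (c (?x i) - c 0) + ?e (Suc i) i"
      "?B $$ (i, Suc i) - d 0 = (d (?x i) - d 0) + ?e i (Suc i)"
      by (simp_all add: entry[OF i] entry[OF i(2,1)] tridiag_def)
    moreover have "tridiag (Suc i) i" "tridiag i (Suc i)" by (simp_all add: tridiag_def)
    ultimately show "cmod (?B $$ (Suc i, i) - c 0) \<le> t" "cmod (?B $$ (i, Suc i) - d 0) \<le> t"
      using near_sum[OF conjunct1[OF conjunct2[OF coeff'[OF i(2)]]] noise'[OF i]]
        near_sum[OF conjunct2[OF conjunct2[OF coeff'[OF i(2)]]] noise'[OF i(2,1)]]
      by (simp_all only:)
  qed
qed

lemma card_tridiag_le: "card {(r, s). r < K \<and> s < K \<and> tridiag r s} \<le> 3 * K"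
proof -
  have "{(r, s). r < K \<and> s < K \<and> tridiag r s}
      \<subseteq> (\<lambda>r. (r, r)) ` {..<K} \<union> (\<lambda>r. (r, Suc r)) ` {..<K} \<union> (\<lambda>r. (Suc r, r)) ` {..<K}"
    by (auto simp: tridiag_def)
  then have "card {(r, s). r < K \<and> s < K \<and> tridiag r s}
      \<le> card ((\<lambda>r. (r, r)) ` {..<K}) + card ((\<lambda>r. (r, Suc r)) ` {..<K}) + card ((\<lambda>r. (Suc r, r)) ` {..<K})"
    by (meson card_Un_le card_mono finite_UnI finite_imageI finite_lessThan add_right_mono order_trans)
  also have "\<dots> \<le> K + K + K"
    by (intro add_mono order_trans[OF card_image_le]) auto
  finally show ?thesis by simp
qed

lemma (in prob_space) prob_exists_norm_ge_le:
  fixes X :: "'i \<Rightarrow> 'a \<Rightarrow> 'b::real_normed_vector" and V t :: real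
  assumes "finite J" and [measurable]: "\<And>i. i \<in> J \<Longrightarrow> X i \<in> borel_measurable M"
    and "\<And>i. i \<in> J \<Longrightarrow> integrable M (\<lambda>\<omega>. (norm (X i \<omega>))\<^sup>2)"
    and "\<And>i. i \<in> J \<Longrightarrow> expectation (\<lambda>\<omega>. (norm (X i \<omega>))\<^sup>2) \<le> V" and "0 < t"
  shows "{\<omega> \<in> space M. \<exists>i\<in>J. t \<le> norm (X i \<omega>)} \<in> events"
    and "prob {\<omega> \<in> space M. \<exists>i\<in>J. t \<le> norm (X i \<omega>)} \<le> card J * V / t\<^sup>2"
proof -
  define A where "A i = {\<omega> \<in> space M. t\<^sup>2 \<le> (norm (X i \<omega>))\<^sup>2}" for i
  have A_sets: "A i \<in> events" if "i \<in> J" for i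
    using that unfolding A_def by measurable
  have eq: "{\<omega> \<in> space M. \<exists>i\<in>J. t \<le> norm (X i \<omega>)} = (\<Union>i\<in>J. A i)"
    using \<open>0 < t\<close> by (auto simp: A_def abs_le_square_iff[symmetric])
  show "{\<omega> \<in> space M. \<exists>i\<in>J. t \<le> norm (X i \<omega>)} \<in> events"
    unfolding eq using \<open>finite J\<close> A_sets by blast
  have "prob (\<Union>i\<in>J. A i) \<le> (\<Sum>i\<in>J. prob (A i))"
    using \<open>finite J\<close> A_sets by (rule measure_UNION_le)
  also have "\<dots> \<le> (\<Sum>i\<in>J. V / t\<^sup>2)"
  proof (rule sum_mono)
    fix i assume "i \<in> J"
    have "prob (A i) \<le> expectation (\<lambda>\<omega>. (norm (X i \<omega>))\<^sup>2) / t\<^sup>2"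
      unfolding A_def using assms(3)[OF \<open>i \<in> J\<close>] \<open>0 < t\<close>
      by (intro integral_Markov_inequality_measure[where A = "space M"]) auto
    also have "\<dots> \<le> V / t\<^sup>2" using assms(4)[OF \<open>i \<in> J\<close>] by (simp add: divide_right_mono)
    finally show "prob (A i) \<le> V / t\<^sup>2" .
  qed
  finally show "prob {\<omega> \<in> space M. \<exists>i\<in>J. t \<le> norm (X i \<omega>)} \<le> card J * V / t\<^sup>2"
    unfolding eq by simp
qed

lemma eventually_uniformly_close_to_0:
  fixes f :: "real \<Rightarrow> 'a::metric_space" and x :: "nat \<Rightarrow> real"
  assumes "continuous_on {0..1} f" "0 < e" "x \<longlonglongrightarrow> 0"
  shows "eventually (\<lambda>n. \<forall>y. 0 \<le> y \<longrightarrow> y \<le> x n \<longrightarrow> dist (f y) (f 0) < e) sequentially"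
proof -
  obtain \<delta> where "0 < \<delta>" and \<delta>: "\<And>y. y \<in> {0..1} \<Longrightarrow> dist y 0 < \<delta> \<Longrightarrow> dist (f y) (f 0) < e"
    using assms(1,2) unfolding continuous_on_iff by (metis atLeastAtMost_iff order_refl zero_le_one)
  have "eventually (\<lambda>n. x n < min \<delta> 1) sequentially"
    using assms(3) \<open>0 < \<delta>\<close> by (intro order_tendstoD(2)) auto
  then show ?thesis
    by eventually_elim (auto intro!: \<delta>)
qed

lemma eventually_mult_le_of_ratio_tendsto_0:
  fixes k :: "nat \<Rightarrow> nat"
  assumes "(\<lambda>n. real (k n) / real n) \<longlonglongrightarrow> 0"
  shows "eventually (\<lambda>n. j * k n \<le> n) sequentially"
proof -
  have lim: "(\<lambda>n. real j * (real (k n) / real n)) \<longlonglongrightarrow> 0"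
    by (rule tendsto_mult_right_zero[OF assms])
  have "eventually (\<lambda>n. real j * (real (k n) / real n) < 1) sequentially"
    using order_tendstoD(2)[OF lim, of 1] by simp
  then show ?thesis using eventually_gt_at_top[of 0]
  proof eventually_elim
    case (elim n)
    then have "real (j * k n) < real n" by (simp add: divide_less_eq)
    then show ?case by (simp only: of_nat_less_iff)
  qed
qed

section \<open>Concentration of the log-determinant\<close>

lemma prob_block_noise_le:
  fixes M :: "'w measure" and \<xi> :: "nat \<Rightarrow> nat \<Rightarrow> nat \<Rightarrow> 'w \<Rightarrow> complex" and \<mu> :: "complex measure"
    and n K off :: nat
  assumes "prob_space M"
    and meas: "\<And>n r s. r < n \<Longrightarrow> s < n \<Longrightarrow> tridiag r s \<Longrightarrow> \<xi> n r s \<in> borel_measurable M"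
    and distr: "\<And>n r s. r < n \<Longrightarrow> s < n \<Longrightarrow> tridiag r s \<Longrightarrow> distr M borel (\<xi> n r s) = \<mu>"
    and square_integrable: "\<And>n r s. r < n \<Longrightarrow> s < n \<Longrightarrow> tridiag r s \<Longrightarrow>
           integrable M (\<lambda>\<omega>. (cmod (\<xi> n r s \<omega>))\<^sup>2)"
    and "off + K \<le> n" "0 < t"
  shows "{\<omega> \<in> space M. \<exists>r<K. \<exists>s<K. tridiag r s \<and>
           t \<le> cmod (complex_of_real (\<sigma> n) * \<xi> n (off + r) (off + s) \<omega>)} \<in> sets M"
    and "measure M {\<omega> \<in> space M. \<exists>r<K. \<exists>s<K. tridiag r s \<and>
           t \<le> cmod (complex_of_real (\<sigma> n) * \<xi> n (off + r) (off + s) \<omega>)}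
         \<le> 3 * real K * (\<sigma> n)\<^sup>2 * (\<integral>x. (cmod x)\<^sup>2 \<partial>\<mu>) / t\<^sup>2"
proof -
  interpret prob_space M by fact
  define J where "J = {(r, s). r < K \<and> s < K \<and> tridiag r s}"
  define X where "X i \<omega> = complex_of_real (\<sigma> n) * \<xi> n (off + fst i) (off + snd i) \<omega>" for i \<omega>
  define V where "V = (\<sigma> n)\<^sup>2 * (\<integral>x. (cmod x)\<^sup>2 \<partial>\<mu>)"
  have idx: "off + fst i < n" "off + snd i < n" "tridiag (off + fst i) (off + snd i)" if "i \<in> J" for i
    using that \<open>off + K \<le> n\<close> by (auto simp: J_def)
  have "J \<subseteq> {..<K} \<times> {..<K}" by (auto simp: J_def)
  then have "finite J" by (rule finite_subset) simp
  moreover have measurable_X: "X i \<in> borel_measurable M" if "i \<in> J" for i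
    using meas[OF idx[OF that]] unfolding X_def by measurable
  have integrable_X: "integrable M (\<lambda>\<omega>. (norm (X i \<omega>))\<^sup>2)" if "i \<in> J" for i
    using square_integrable[OF idx[OF that]] by (simp add: X_def norm_mult power_mult_distrib)
  have expectation_X: "expectation (\<lambda>\<omega>. (norm (X i \<omega>))\<^sup>2) \<le> V" if "i \<in> J" for i
  proof -
    have "expectation (\<lambda>\<omega>. (cmod (\<xi> n (off + fst i) (off + snd i) \<omega>))\<^sup>2) = (\<integral>x. (cmod x)\<^sup>2 \<partial>\<mu>)"
      using meas[OF idx[OF that]] unfolding distr[OF idx[OF that], symmetric]
      by (subst integral_distr) auto
    then show ?thesis by (simp add: X_def V_def norm_mult power_mult_distrib)
  qed
  note noise_event = prob_exists_norm_ge_le[of J X V t, OF \<open>finite J\<close> measurable_X integrable_X expectation_X \<open>0 < t\<close>]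
  have eq: "{\<omega> \<in> space M. \<exists>i\<in>J. t \<le> norm (X i \<omega>)} = {\<omega> \<in> space M. \<exists>r<K. \<exists>s<K. tridiag r s \<and>
      t \<le> cmod (complex_of_real (\<sigma> n) * \<xi> n (off + r) (off + s) \<omega>)}"
    by (auto simp: J_def X_def)
  show "{\<omega> \<in> space M. \<exists>r<K. \<exists>s<K. tridiag r s \<and>
      t \<le> cmod (complex_of_real (\<sigma> n) * \<xi> n (off + r) (off + s) \<omega>)} \<in> sets M"
    using noise_event(1) unfolding eq .
  have "card J * V / t\<^sup>2 \<le> 3 * real K * V / t\<^sup>2"
    using card_tridiag_le[of K] by (intro divide_right_mono mult_right_mono) (auto simp: J_def V_def)
  then show "measure M {\<omega> \<in> space M. \<exists>r<K. \<exists>s<K. tridiag r s \<and>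
      t \<le> cmod (complex_of_real (\<sigma> n) * \<xi> n (off + r) (off + s) \<omega>)}
      \<le> 3 * real K * (\<sigma> n)\<^sup>2 * (\<integral>x. (cmod x)\<^sup>2 \<partial>\<mu>) / t\<^sup>2"
    using noise_event(2) unfolding eq by (simp add: V_def mult.assoc)
qed

lemma measure_block_deviation_le:
  fixes M :: "'w measure" and b c d :: "real \<Rightarrow> complex" and \<sigma> :: "nat \<Rightarrow> real"
    and \<xi> :: "nat \<Rightarrow> nat \<Rightarrow> nat \<Rightarrow> 'w \<Rightarrow> complex" and \<mu> :: "complex measure"
    and n K j :: nat and z :: complex and t L \<epsilon> :: real
  assumes "prob_space M"
    and meas: "\<And>n r s. r < n \<Longrightarrow> s < n \<Longrightarrow> tridiag r s \<Longrightarrow> \<xi> n r s \<in> borel_measurable M"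
    and distr: "\<And>n r s. r < n \<Longrightarrow> s < n \<Longrightarrow> tridiag r s \<Longrightarrow> distr M borel (\<xi> n r s) = \<mu>"
    and square_integrable: "\<And>n r s. r < n \<Longrightarrow> s < n \<Longrightarrow> tridiag r s \<Longrightarrow>
           integrable M (\<lambda>\<omega>. (cmod (\<xi> n r s \<omega>))\<^sup>2)"
    and "1 \<le> j" "j * K \<le> n" "0 < K" "0 < t"
    and coeff: "\<And>y. 0 \<le> y \<Longrightarrow> y \<le> real (j * K) / real n \<Longrightarrow>
       cmod (b y - b 0) < t / 2 \<and> cmod (c y - c 0) < t / 2 \<and> cmod (d y - d 0) < t / 2"
    and det_bound: "\<And>A. A \<in> carrier_mat K K \<Longrightarrow> near_toeplitz_tridiagonal t (b 0 - z) (c 0) (d 0) A \<Longrightarrow>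
       det A \<noteq> 0 \<and> \<bar>ln (cmod (det A)) - K * L\<bar> < K * (\<epsilon> / 2)"
    and gamma: "\<bar>gamma_fn b c d (real (j * K) / real n) z - L\<bar> < \<epsilon> / 2"
  shows "measure M {\<omega> \<in> space M.
        det (principal_block (R_mat b c d \<sigma> \<xi> n \<omega>) K j - z \<cdot>\<^sub>m 1\<^sub>m K) = 0 \<or>
        \<bar>ln (cmod (det (principal_block (R_mat b c d \<sigma> \<xi> n \<omega>) K j - z \<cdot>\<^sub>m 1\<^sub>m K)))
          - K * gamma_fn b c d (real (j * K) / real n) z\<bar> \<ge> K * \<epsilon>}
     \<le> 3 * real K * (\<sigma> n)\<^sup>2 * (\<integral>x. (cmod x)\<^sup>2 \<partial>\<mu>) / (t / 2)\<^sup>2"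
proof -
  interpret prob_space M by fact
  define off where "off = (j - 1) * K"
  have "off + K = j * K" using \<open>1 \<le> j\<close> by (cases j) (auto simp: off_def)
  let ?B = "\<lambda>\<omega>. principal_block (R_mat b c d \<sigma> \<xi> n \<omega>) K j - z \<cdot>\<^sub>m 1\<^sub>m K"
  let ?\<gamma> = "gamma_fn b c d (real (j * K) / real n) z"
  let ?noise = "{\<omega> \<in> space M. \<exists>r<K. \<exists>s<K. tridiag r s \<and>
      t / 2 \<le> cmod (complex_of_real (\<sigma> n) * \<xi> n (off + r) (off + s) \<omega>)}"
  have "det (?B \<omega>) \<noteq> 0 \<and> \<bar>ln (cmod (det (?B \<omega>))) - K * ?\<gamma>\<bar> < K * \<epsilon>"
    if "\<omega> \<in> space M" "\<omega> \<notin> ?noise" for \<omega>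
  proof -
    have "near_toeplitz_tridiagonal t (b 0 - z) (c 0) (d 0) (?B \<omega>)"
      using \<open>1 \<le> j\<close> \<open>j * K \<le> n\<close> coeff that
      by (intro principal_block_near_toeplitz) (auto simp: off_def not_le)
    then have "det (?B \<omega>) \<noteq> 0 \<and> \<bar>ln (cmod (det (?B \<omega>))) - K * L\<bar> < K * (\<epsilon> / 2)"
      by (intro det_bound) auto
    moreover have "\<bar>K * ?\<gamma> - K * L\<bar> < K * (\<epsilon> / 2)"
      using gamma \<open>0 < K\<close> by (simp add: abs_mult right_diff_distrib[symmetric])
    ultimately show ?thesis by linarith
  qed
  then have bad_subset: "{\<omega> \<in> space M. det (?B \<omega>) = 0 \<or>
      \<bar>ln (cmod (det (?B \<omega>))) - K * ?\<gamma>\<bar> \<ge> K * \<epsilon>} \<subseteq> ?noise"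
    by force
  have "off + K \<le> n" using \<open>off + K = j * K\<close> \<open>j * K \<le> n\<close> by simp
  note noise = prob_block_noise_le[OF \<open>prob_space M\<close> meas distr square_integrable this
      half_gt_zero[OF \<open>0 < t\<close>], where \<sigma> = \<sigma>]
  have noise_sets: "?noise \<in> sets M" by (rule noise(1))
  have "measure M {\<omega> \<in> space M. det (?B \<omega>) = 0 \<or>
      \<bar>ln (cmod (det (?B \<omega>))) - K * ?\<gamma>\<bar> \<ge> K * \<epsilon>} \<le> measure M ?noise"
    using bad_subset noise_sets by (rule finite_measure_mono)
  also have "\<dots> \<le> 3 * real K * (\<sigma> n)\<^sup>2 * (\<integral>x. (cmod x)\<^sup>2 \<partial>\<mu>) / (t / 2)\<^sup>2"
    by (rule noise(2))
  finally show ?thesis .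
qed

lemma ln_det_block_concentration:
  fixes M :: "'w measure" and b c d :: "real \<Rightarrow> complex" and \<sigma> :: "nat \<Rightarrow> real"
    and \<xi> :: "nat \<Rightarrow> nat \<Rightarrow> nat \<Rightarrow> 'w \<Rightarrow> complex" and \<mu> :: "complex measure"
    and k :: "nat \<Rightarrow> nat" and j :: nat and z :: complex and \<epsilon> :: real
  assumes "prob_space M"
    and cont: "continuous_on {0..1} b" "continuous_on {0..1} c" "continuous_on {0..1} d"
    and cd_nonzero: "\<And>x. x \<in> {0..1} \<Longrightarrow> c x * d x \<noteq> 0"
    and meas: "\<And>n r s. r < n \<Longrightarrow> s < n \<Longrightarrow> tridiag r s \<Longrightarrow> \<xi> n r s \<in> borel_measurable M"
    and distr: "\<And>n r s. r < n \<Longrightarrow> s < n \<Longrightarrow> tridiag r s \<Longrightarrow> distr M borel (\<xi> n r s) = \<mu>"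
    and square_integrable: "\<And>n r s. r < n \<Longrightarrow> s < n \<Longrightarrow> tridiag r s \<Longrightarrow>
           integrable M (\<lambda>\<omega>. (cmod (\<xi> n r s \<omega>))\<^sup>2)"
    and k_lim: "filterlim k at_top sequentially" "(\<lambda>n. real (k n) / real n) \<longlonglongrightarrow> 0"
    and noise_lim: "(\<lambda>n. real (k n) * (\<sigma> n)\<^sup>2) \<longlonglongrightarrow> 0"
    and "1 \<le> j"
    and distinct: "cmod (root_plus (b 0 - z) (c 0 * d 0)) \<noteq> cmod (root_minus (b 0 - z) (c 0 * d 0))"
    and "0 < \<epsilon>"
  shows "(\<lambda>n. measure M {\<omega> \<in> space M.
        det (principal_block (R_mat b c d \<sigma> \<xi> n \<omega>) (k n) j - z \<cdot>\<^sub>m 1\<^sub>m (k n)) = 0 \<or>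
        \<bar>ln (cmod (det (principal_block (R_mat b c d \<sigma> \<xi> n \<omega>) (k n) j - z \<cdot>\<^sub>m 1\<^sub>m (k n))))
          - real (k n) * gamma_fn b c d (real (j * k n) / real n) z\<bar> \<ge> real (k n) * \<epsilon>})
     \<longlonglongrightarrow> 0"
proof -
  obtain \<mu>1 \<mu>2 where sum: "\<mu>1 + \<mu>2 = b 0 - z" and prod: "\<mu>1 * \<mu>2 = c 0 * d 0"
    and "cmod \<mu>2 < cmod \<mu>1" and \<mu>1: "cmod \<mu>1 = dominant_root_norm (b 0 - z) (c 0 * d 0)"
    using distinct by (rule obtain_dominant_root)
  obtain t K0 where "0 < t" and det_bound: "\<And>K A. K0 \<le> K \<Longrightarrow> A \<in> carrier_mat K K \<Longrightarrow>
      near_toeplitz_tridiagonal t (b 0 - z) (c 0) (d 0) A \<Longrightarrow>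
      det A \<noteq> 0 \<and> \<bar>ln (cmod (det A)) - K * ln (cmod \<mu>1)\<bar> < K * (\<epsilon> / 2)"
    using ln_det_near_toeplitz_tridiagonal[OF \<open>cmod \<mu>2 < cmod \<mu>1\<close> prod[symmetric]
        half_gt_zero[OF \<open>0 < \<epsilon>\<close>]] unfolding sum by blast
  define x where "x n = real (j * k n) / real n" for n
  have "x = (\<lambda>n. real j * (real (k n) / real n))" by (auto simp: x_def)
  then have "x \<longlonglongrightarrow> 0" using tendsto_mult_right_zero[OF k_lim(2)] by simp
  have "(\<lambda>n. gamma_fn b c d (x n) z) \<longlonglongrightarrow> ln (cmod \<mu>1)"
    using tendsto_gamma_fn_0[OF cont cd_nonzero \<open>x \<longlonglongrightarrow> 0\<close>, of z] cd_nonzero[of 0]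
    by (simp add: x_def \<mu>1 gamma_fn_eq_ln_dominant_root_norm)
  then have ev_gamma: "eventually (\<lambda>n. \<bar>gamma_fn b c d (x n) z - ln (cmod \<mu>1)\<bar> < \<epsilon> / 2) sequentially"
    unfolding tendsto_iff dist_real_def using half_gt_zero[OF \<open>0 < \<epsilon>\<close>] by blast
  have ev_coeff: "eventually (\<lambda>n. \<forall>y. 0 \<le> y \<longrightarrow> y \<le> x n \<longrightarrow>
      cmod (b y - b 0) < t / 2 \<and> cmod (c y - c 0) < t / 2 \<and> cmod (d y - d 0) < t / 2) sequentially"
    using eventually_uniformly_close_to_0[OF cont(1) half_gt_zero[OF \<open>0 < t\<close>] \<open>x \<longlonglongrightarrow> 0\<close>]
      eventually_uniformly_close_to_0[OF cont(2) half_gt_zero[OF \<open>0 < t\<close>] \<open>x \<longlonglongrightarrow> 0\<close>]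
      eventually_uniformly_close_to_0[OF cont(3) half_gt_zero[OF \<open>0 < t\<close>] \<open>x \<longlonglongrightarrow> 0\<close>]
    by eventually_elim (simp add: dist_norm)
  have ev_k: "eventually (\<lambda>n. max K0 1 \<le> k n) sequentially"
    using k_lim(1) unfolding filterlim_at_top by blast
  note ev_n = eventually_mult_le_of_ratio_tendsto_0[OF k_lim(2), of j]
  define V where "V = (\<integral>x. (cmod x)\<^sup>2 \<partial>\<mu>)"
  have "(\<lambda>n. 3 * V / (t / 2)\<^sup>2 * (real (k n) * (\<sigma> n)\<^sup>2)) \<longlonglongrightarrow> 0"
    by (rule tendsto_mult_right_zero[OF noise_lim])
  moreover have "eventually (\<lambda>n. norm (measure M {\<omega> \<in> space M.
        det (principal_block (R_mat b c d \<sigma> \<xi> n \<omega>) (k n) j - z \<cdot>\<^sub>m 1\<^sub>m (k n)) = 0 \<or>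
        \<bar>ln (cmod (det (principal_block (R_mat b c d \<sigma> \<xi> n \<omega>) (k n) j - z \<cdot>\<^sub>m 1\<^sub>m (k n))))
          - real (k n) * gamma_fn b c d (real (j * k n) / real n) z\<bar> \<ge> real (k n) * \<epsilon>})
        \<le> 3 * V / (t / 2)\<^sup>2 * (real (k n) * (\<sigma> n)\<^sup>2)) sequentially"
    using ev_gamma ev_coeff ev_k ev_n
  proof eventually_elim
    case (elim n)
    have "0 < k n" using elim(3) by simp
    have coeff: "cmod (b y - b 0) < t / 2 \<and> cmod (c y - c 0) < t / 2 \<and> cmod (d y - d 0) < t / 2"
      if "0 \<le> y" "y \<le> real (j * k n) / real n" for y
      using elim(2) that unfolding x_def by blast
    have det_bound_n: "det A \<noteq> 0 \<and> \<bar>ln (cmod (det A)) - k n * ln (cmod \<mu>1)\<bar> < k n * (\<epsilon> / 2)"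
      if "A \<in> carrier_mat (k n) (k n)" "near_toeplitz_tridiagonal t (b 0 - z) (c 0) (d 0) A" for A
      by (rule det_bound[OF _ that]) (use elim(3) in simp)
    have gamma: "\<bar>gamma_fn b c d (real (j * k n) / real n) z - ln (cmod \<mu>1)\<bar> < \<epsilon> / 2"
      using elim(1) unfolding x_def .
    have "measure M {\<omega> \<in> space M.
        det (principal_block (R_mat b c d \<sigma> \<xi> n \<omega>) (k n) j - z \<cdot>\<^sub>m 1\<^sub>m (k n)) = 0 \<or>
        \<bar>ln (cmod (det (principal_block (R_mat b c d \<sigma> \<xi> n \<omega>) (k n) j - z \<cdot>\<^sub>m 1\<^sub>m (k n))))
          - real (k n) * gamma_fn b c d (real (j * k n) / real n) z\<bar> \<ge> real (k n) * \<epsilon>}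
        \<le> 3 * real (k n) * (\<sigma> n)\<^sup>2 * V / (t / 2)\<^sup>2"
      unfolding V_def
      by (rule measure_block_deviation_le[OF \<open>prob_space M\<close> meas distr square_integrable \<open>1 \<le> j\<close>
            elim(4) \<open>0 < k n\<close> \<open>0 < t\<close> coeff det_bound_n gamma])
    then show ?case by (simp add: field_simps)
  qed
  ultimately show ?thesis by (rule Lim_null_comparison[rotated])
qed

theorem lemma5:
  fixes M :: "'w measure"
    and b c d :: "real \<Rightarrow> complex"
    and \<sigma> :: "nat \<Rightarrow> real"
    and \<xi> :: "nat \<Rightarrow> nat \<Rightarrow> nat \<Rightarrow> 'w \<Rightarrow> complex"
    and \<mu> :: "complex measure"
    and k :: "nat \<Rightarrow> nat"
    and j :: nat
  assumes "prob_space M"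
    and "continuous_on {0..1} b" "continuous_on {0..1} c" "continuous_on {0..1} d"
    and "\<And>x. x \<in> {0..1} \<Longrightarrow> c x * d x \<noteq> 0"
    and "\<And>n. \<sigma> n > 0" "\<sigma> \<longlonglongrightarrow> 0"
    and "\<And>n r s. r < n \<Longrightarrow> s < n \<Longrightarrow> tridiag r s \<Longrightarrow> \<xi> n r s \<in> borel_measurable M"
    and "\<And>n. prob_space.indep_vars M (\<lambda>_. borel) (\<lambda>(r, s). \<xi> n r s)
                {(r, s). r < n \<and> s < n \<and> tridiag r s}"
    and "\<And>n r s. r < n \<Longrightarrow> s < n \<Longrightarrow> tridiag r s \<Longrightarrow> distr M borel (\<xi> n r s) = \<mu>"
    and "\<And>n r s. r < n \<Longrightarrow> s < n \<Longrightarrow> tridiag r s \<Longrightarrow> integrable M (\<xi> n r s)"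
    and "\<And>n r s. r < n \<Longrightarrow> s < n \<Longrightarrow> tridiag r s \<Longrightarrow> prob_space.expectation M (\<xi> n r s) = 0"
    and "\<And>n r s. r < n \<Longrightarrow> s < n \<Longrightarrow> tridiag r s \<Longrightarrow>
           integrable M (\<lambda>\<omega>. (cmod (\<xi> n r s \<omega>))\<^sup>2)"
    and "\<And>n. k n > 0" "filterlim k at_top sequentially"
    and "(\<lambda>n. real (k n) / real n) \<longlonglongrightarrow> 0"
    and "(\<lambda>n. real (k n) * (\<sigma> n)\<^sup>2) \<longlonglongrightarrow> 0"
    and "j \<ge> 1"
  shows "AE z in lborel. \<forall>\<epsilon>>0.
     (\<lambda>n. measure M {\<omega> \<in> space M.
        det (principal_block (R_mat b c d \<sigma> \<xi> n \<omega>) (k n) j - z \<cdot>\<^sub>m 1\<^sub>m (k n)) = 0 \<or>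
        \<bar>ln (cmod (det (principal_block (R_mat b c d \<sigma> \<xi> n \<omega>) (k n) j - z \<cdot>\<^sub>m 1\<^sub>m (k n))))
          - real (k n) * gamma_fn b c d (real (j * k n) / real n) z\<bar> \<ge> real (k n) * \<epsilon>})
     \<longlonglongrightarrow> 0"
proof -
  have "c 0 * d 0 \<noteq> 0" using assms(5)[of 0] by simp
  then have "AE z in lborel. cmod (root_plus (b 0 - z) (c 0 * d 0)) \<noteq> cmod (root_minus (b 0 - z) (c 0 * d 0))"
    by (rule AE_root_norms_distinct)
  then show ?thesis
  proof (rule AE_mp, intro AE_I2 impI allI)
    fix z :: complex and \<epsilon> :: real
    assume distinct: "cmod (root_plus (b 0 - z) (c 0 * d 0)) \<noteq> cmod (root_minus (b 0 - z) (c 0 * d 0))"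
      and "0 < \<epsilon>"
    show "(\<lambda>n. measure M {\<omega> \<in> space M.
        det (principal_block (R_mat b c d \<sigma> \<xi> n \<omega>) (k n) j - z \<cdot>\<^sub>m 1\<^sub>m (k n)) = 0 \<or>
        \<bar>ln (cmod (det (principal_block (R_mat b c d \<sigma> \<xi> n \<omega>) (k n) j - z \<cdot>\<^sub>m 1\<^sub>m (k n))))
          - real (k n) * gamma_fn b c d (real (j * k n) / real n) z\<bar> \<ge> real (k n) * \<epsilon>})
      \<longlonglongrightarrow> 0"
      by (rule ln_det_block_concentration[OF assms(1-5,8,10,13,15-18) distinct \<open>0 < \<epsilon>\<close>])
  qed
qed

end
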